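(* Let $K$ be a finite simplicial complex equipped with two assignments of edge lengths, giving discrete geodesic distance functions $f^1_p,f^2_p$ for each vertex $p$, and let $\epsilon=\max_{p\in\mathrm{Vert}(K)}\max_{q\in\mathrm{Vert}(K)}|f^1_p(q)-f^2_p(q)|$. Fix $d$ and let $\mathcal{X}^1$ and $\mathcal{X}^2$ be subgroup filtrations of $H_d(K;\mathbb{Z}_2)$ obtained from optimal homology bases with respect to the sizes $S^1$ and $S^2$ respectively. Then $\mathrm{dist}(\mathcal{X}^1,\mathcal{X}^2)\le\epsilon$.
   Context: For a given edge-length assignment, $f_p(q)$ is the shortest-path length from vertex $p$ to vertex $q$ in the 1-skeleton of $K$, and $f_p(\sigma)=\max_{q\in\mathrm{Vert}(\sigma)}f_p(q)$ for a simplex $\sigma$. The geodesic ball $B_p^t=\{\sigma\in K:f_p(\sigma)\le t\}$ carries a class $h$ if it contains a cycle representing $h$; $r_{f_p}(h)$ is the least $t$ for which $B_p^t$ carries $h$, and the size of $h$ is $S(h)=\min_{p}r_{f_p}(h)$ ($S^1,S^2$ denote sizes computed from $f^1,f^2$). Let $\beta=\dim H_d(K;\mathbb{Z}_2)$. An optimal homology basis is a set of $\beta$ linearly independent (nonzero) classes whose sizes have minimal sum; such a basis is obtained greedily by scanning nontrivial classes in increasing order of size and keeping each one linearly independent of those already kept. Given an optimal basis $h_1,\dots,h_\beta$ sorted so that $S(h_i)\le S(h_{i+1})$, its subgroup filtration is $\mathcal{X}=\{\psi_0,\psi_1,\dots,\psi_\beta\}$ with $\psi_i=\mathrm{span}(h_1,\dots,h_i)$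 ($\psi_0$ trivial), and $S(\psi_i):=S(h_i)$ for $i\ge1$. For filtrations $\mathcal{X}^1,\mathcal{X}^2$, the projection $\mathrm{proj}(\psi^1_i,\mathcal{X}^2)$ is $\psi^2_j$ with $j$ the least index such that $\psi^1_i\subseteq\psi^2_j$ (and symmetrically). The distance is $\mathrm{dist}(\mathcal{X}^1,\mathcal{X}^2)=\max\{\max_i|S^1(\psi^1_i)-S^2(\mathrm{proj}(\psi^1_i,\mathcal{X}^2))|,\ \max_i|S^2(\psi^2_i)-S^1(\mathrm{proj}(\psi^2_i,\mathcal{X}^1))|\}$, the maxima taken over $i=1,\dots,\beta$. *)

theory Defs
  imports Complex_Main
begin

definition simplicial_complex :: "'v set set \<Rightarrow> bool" where
  "simplicial_complex K \<longleftrightarrow> finite K \<and> (\<forall>\<sigma>\<in>K. finite \<sigma> \<and> \<sigma> \<noteq> {}) \<and>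
     (\<forall>\<sigma>\<in>K. \<forall>\<tau>. \<tau> \<subseteq> \<sigma> \<and> \<tau> \<noteq> {} \<longrightarrow> \<tau> \<in> K)"

definition vertices :: "'v set set \<Rightarrow> 'v set" where
  "vertices K = \<Union>K"

definition simplices :: "'v set set \<Rightarrow> nat \<Rightarrow> 'v set set" where
  "simplices K k = {\<sigma>\<in>K. card \<sigma> = Suc k}"

text \<open>A k-chain with Z_2 coefficients is a set of k-simplices; addition is symmetric difference.\<close>
definition symdiff :: "'a set \<Rightarrow> 'a set \<Rightarrow> 'a set" where
  "symdiff A B = (A - B) \<union> (B - A)"

definition bd :: "'v set set \<Rightarrow> nat \<Rightarrow> 'v set set \<Rightarrow> 'v set set" where
  "bd K k c = (if k = 0 then {} else
      {\<tau>\<in>simplices K (k - 1). odd (card {\<sigma>\<in>c. \<tau> \<subseteq> \<sigma>})})"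

definition cycles :: "'v set set \<Rightarrow> nat \<Rightarrow> 'v set set set" where
  "cycles K d = {c. c \<subseteq> simplices K d \<and> bd K d c = {}}"

definition boundaries :: "'v set set \<Rightarrow> nat \<Rightarrow> 'v set set set" where
  "boundaries K d = {bd K (Suc d) c | c. c \<subseteq> simplices K (Suc d)}"

definition hclass :: "'v set set \<Rightarrow> nat \<Rightarrow> 'v set set \<Rightarrow> 'v set set set" where
  "hclass K d z = {z'\<in>cycles K d. symdiff z' z \<in> boundaries K d}"

definition homology :: "'v set set \<Rightarrow> nat \<Rightarrow> 'v set set set set" where
  "homology K d = hclass K d ` cycles K d"

definition hzero :: "'v set set \<Rightarrow> nat \<Rightarrow> 'v set set set" where
  "hzero K d = hclass K d {}"

definition hadd :: "'v set set set \<Rightarrow> 'v set set set \<Rightarrow> 'v set set set" where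
  "hadd h1 h2 = {z. \<exists>a\<in>h1. \<exists>b\<in>h2. z = symdiff a b}"

inductive_set hspan :: "'v set set \<Rightarrow> nat \<Rightarrow> 'v set set set set \<Rightarrow> 'v set set set set"
  for K d H where
  zero: "hzero K d \<in> hspan K d H"
| add: "h \<in> H \<Longrightarrow> x \<in> hspan K d H \<Longrightarrow> hadd h x \<in> hspan K d H"

definition hindep :: "'v set set \<Rightarrow> nat \<Rightarrow> 'v set set set list \<Rightarrow> bool" where
  "hindep K d hs \<longleftrightarrow> distinct hs \<and> set hs \<subseteq> homology K d \<and>
     (\<forall>h\<in>set hs. h \<notin> hspan K d (set hs - {h}))"

definition hdim :: "'v set set \<Rightarrow> nat \<Rightarrow> nat" where
  "hdim K d = Max {length hs | hs. hindep K d hs}"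

definition edges :: "'v set set \<Rightarrow> 'v set set" where
  "edges K = {e\<in>K. card e = 2}"

definition edge_lengths :: "'v set set \<Rightarrow> ('v set \<Rightarrow> real) \<Rightarrow> bool" where
  "edge_lengths K l \<longleftrightarrow> (\<forall>e\<in>edges K. l e > 0)"

definition walk :: "'v set set \<Rightarrow> 'v list \<Rightarrow> bool" where
  "walk K xs \<longleftrightarrow> xs \<noteq> [] \<and> set xs \<subseteq> vertices K \<and>
     (\<forall>i < length xs - 1. {xs ! i, xs ! Suc i} \<in> edges K)"

definition walk_len :: "('v set \<Rightarrow> real) \<Rightarrow> 'v list \<Rightarrow> real" where
  "walk_len l xs = (\<Sum>i < length xs - 1. l {xs ! i, xs ! Suc i})"

definition skel_connected :: "'v set set \<Rightarrow> bool" where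
  "skel_connected K \<longleftrightarrow> K \<noteq> {} \<and>
     (\<forall>p\<in>vertices K. \<forall>q\<in>vertices K. \<exists>xs. walk K xs \<and> hd xs = p \<and> last xs = q)"

definition geod :: "('v set \<Rightarrow> real) \<Rightarrow> 'v set set \<Rightarrow> 'v \<Rightarrow> 'v \<Rightarrow> real" where
  "geod l K p q = Inf {walk_len l xs | xs. walk K xs \<and> hd xs = p \<and> last xs = q}"

definition geod_simplex :: "('v set \<Rightarrow> real) \<Rightarrow> 'v set set \<Rightarrow> 'v \<Rightarrow> 'v set \<Rightarrow> real" where
  "geod_simplex l K p \<sigma> = Max (geod l K p ` \<sigma>)"

definition ball :: "('v set \<Rightarrow> real) \<Rightarrow> 'v set set \<Rightarrow> 'v \<Rightarrow> real \<Rightarrow> 'v set set" where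
  "ball l K p t = {\<sigma>\<in>K. geod_simplex l K p \<sigma> \<le> t}"

definition carries :: "'v set set \<Rightarrow> 'v set set set \<Rightarrow> bool" where
  "carries B h \<longleftrightarrow> (\<exists>z\<in>h. z \<subseteq> B)"

definition radius :: "('v set \<Rightarrow> real) \<Rightarrow> 'v set set \<Rightarrow> 'v \<Rightarrow> 'v set set set \<Rightarrow> real" where
  "radius l K p h = (LEAST t. carries (ball l K p t) h)"

definition hsize :: "('v set \<Rightarrow> real) \<Rightarrow> 'v set set \<Rightarrow> 'v set set set \<Rightarrow> real" where
  "hsize l K h = Min ((\<lambda>p. radius l K p h) ` vertices K)"

definition optimal_basis ::
  "('v set \<Rightarrow> real) \<Rightarrow> 'v set set \<Rightarrow> nat \<Rightarrow> 'v set set set list \<Rightarrow> bool" where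
  "optimal_basis l K d hs \<longleftrightarrow> hindep K d hs \<and> length hs = hdim K d \<and>
     (\<forall>hs'. hindep K d hs' \<and> length hs' = hdim K d \<longrightarrow>
        sum_list (map (hsize l K) hs) \<le> sum_list (map (hsize l K) hs'))"

text \<open>psi_i = span(h_1,...,h_i), with h_i = hs ! (i-1); psi_0 trivial.\<close>
definition filt :: "'v set set \<Rightarrow> nat \<Rightarrow> 'v set set set list \<Rightarrow> nat \<Rightarrow> 'v set set set set" where
  "filt K d hs i = hspan K d (set (take i hs))"

definition proj_idx ::
  "'v set set \<Rightarrow> nat \<Rightarrow> 'v set set set list \<Rightarrow> 'v set set set list \<Rightarrow> nat \<Rightarrow> nat" where
  "proj_idx K d hs1 hs2 i = (LEAST j. filt K d hs1 i \<subseteq> filt K d hs2 j)"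

definition filt_size :: "('v set \<Rightarrow> real) \<Rightarrow> 'v set set \<Rightarrow> 'v set set set list \<Rightarrow> nat \<Rightarrow> real" where
  "filt_size l K hs i = hsize l K (hs ! (i - 1))"

text \<open>Distance between the filtrations (taken to be 0 when beta = 0, i.e. empty maxima).\<close>
definition filt_dist ::
  "('v set \<Rightarrow> real) \<Rightarrow> ('v set \<Rightarrow> real) \<Rightarrow> 'v set set \<Rightarrow> nat \<Rightarrow>
   'v set set set list \<Rightarrow> 'v set set set list \<Rightarrow> real" where
  "filt_dist l1 l2 K d hs1 hs2 = Max ({0} \<union>
     {\<bar>filt_size l1 K hs1 i - filt_size l2 K hs2 (proj_idx K d hs1 hs2 i)\<bar> | i. i \<in> {1..length hs1}} \<union>
     {\<bar>filt_size l2 K hs2 i - filt_size l1 K hs1 (proj_idx K d hs2 hs1 i)\<bar> | i. i \<in> {1..length hs2}})"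

definition geod_eps :: "('v set \<Rightarrow> real) \<Rightarrow> ('v set \<Rightarrow> real) \<Rightarrow> 'v set set \<Rightarrow> real" where
  "geod_eps l1 l2 K = Max {\<bar>geod l1 K p q - geod l2 K p q\<bar> | p q. p \<in> vertices K \<and> q \<in> vertices K}"

end

theory Submission
  imports Defs
begin

text \<open>
  Changing the edge lengths moves every distance \<open>f\<^sub>p(q)\<close> by at most \<open>\<epsilon>\<close>, hence every
  ball radius and every size \<open>S(h)\<close> by at most \<open>\<epsilon>\<close>. An optimal basis is greedy: each class
  lies in the span of the basis classes of no larger size. So the classes \<open>h\<^sup>1\<^sub>1, \<dots>, h\<^sup>1\<^sub>i\<close>,
  all of \<open>S\<^sup>2\<close>-size at most \<open>S\<^sup>1(h\<^sup>1\<^sub>i) + \<epsilon>\<close>, lie in the span of the basis classes \<open>h\<^sup>2\<^sub>j\<close> with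
  \<open>S\<^sup>2(h\<^sup>2\<^sub>j) \<le> S\<^sup>1(h\<^sup>1\<^sub>i) + \<epsilon>\<close>, which bounds the projection from above; symmetrically, \<open>h\<^sup>1\<^sub>i\<close> lies
  in the span of the \<open>h\<^sup>1\<^sub>k\<close> with \<open>S\<^sup>1(h\<^sup>1\<^sub>k) \<le> S\<^sup>2(proj) + \<epsilon>\<close>, and by independence it must be
  one of them, which bounds the projection from below.
\<close>

lemma symdiff_assoc: "symdiff (symdiff a b) c = symdiff a (symdiff b c)"
  by (auto simp: symdiff_def)

lemma symdiff_commute: "symdiff a b = symdiff b a"
  by (auto simp: symdiff_def)

lemma symdiff_empty [simp]: "symdiff a {} = a" "symdiff {} a = a" "symdiff a a = {}"
  by (auto simp: symdiff_def)

lemma symdiff_cancel_right [simp]: "symdiff (symdiff a b) b = a"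
  by (auto simp: symdiff_def)

lemma symdiff_subset: "a \<subseteq> S \<Longrightarrow> b \<subseteq> S \<Longrightarrow> symdiff a b \<subseteq> S"
  by (auto simp: symdiff_def)

lemma hadd_assoc: "hadd (hadd A B) C = hadd A (hadd B C)"
  unfolding hadd_def by (auto, metis symdiff_assoc, metis symdiff_assoc)

lemma hadd_commute: "hadd A B = hadd B A"
  unfolding hadd_def by (auto, metis symdiff_commute, metis symdiff_commute)

lemma odd_card_symdiff:
  assumes "finite A" "finite B"
  shows "odd (card (symdiff A B)) \<longleftrightarrow> odd (card A) \<noteq> odd (card B)"
proof -
  have "card A = card (A - B) + card (A \<inter> B)" "card B = card (B - A) + card (A \<inter> B)"
    using assms card_Int_Diff[of A B] card_Int_Diff[of B A] by (simp_all add: Int_commute)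
  moreover have "card (symdiff A B) = card (A - B) + card (B - A)"
    unfolding symdiff_def using assms by (intro card_Un_disjoint) auto
  ultimately show ?thesis by presburger
qed

lemma bd_symdiff:
  assumes "finite a" "finite b"
  shows "bd K k (symdiff a b) = symdiff (bd K k a) (bd K k b)"
proof -
  have "{\<sigma>\<in>symdiff a b. \<tau> \<subseteq> \<sigma>} = symdiff {\<sigma>\<in>a. \<tau> \<subseteq> \<sigma>} {\<sigma>\<in>b. \<tau> \<subseteq> \<sigma>}" for \<tau>
    by (auto simp: symdiff_def)
  then have "odd (card {\<sigma>\<in>symdiff a b. \<tau> \<subseteq> \<sigma>}) \<longleftrightarrow>
      odd (card {\<sigma>\<in>a. \<tau> \<subseteq> \<sigma>}) \<noteq> odd (card {\<sigma>\<in>b. \<tau> \<subseteq> \<sigma>})" for \<tau>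
    using assms by (simp add: odd_card_symdiff)
  then show ?thesis
    unfolding bd_def symdiff_def by auto
qed

lemma bd_empty [simp]: "bd K k {} = {}"
  by (auto simp: bd_def)

lemma simplices_subset: "simplices K k \<subseteq> K"
  by (auto simp: simplices_def)

section \<open>Spans and linear independence\<close>

lemma hspan_mono: "H \<subseteq> G \<Longrightarrow> hspan K d H \<subseteq> hspan K d G"
proof
  fix x assume HG: "H \<subseteq> G" and x: "x \<in> hspan K d H"
  from x show "x \<in> hspan K d G"
    by (induction rule: hspan.induct) (use HG in \<open>auto intro: hspan.intros\<close>)
qed

lemma hspan_empty: "x \<in> hspan K d {} \<Longrightarrow> x = hzero K d"
  by (induction rule: hspan.induct) auto

definition hindep_set :: "'v set set \<Rightarrow> nat \<Rightarrow> 'v set set set set \<Rightarrow> bool" where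
  "hindep_set K d H \<longleftrightarrow> H \<subseteq> homology K d \<and> (\<forall>h\<in>H. h \<notin> hspan K d (H - {h}))"

lemma hindep_iff: "hindep K d hs \<longleftrightarrow> distinct hs \<and> hindep_set K d (set hs)"
  by (auto simp: hindep_def hindep_set_def)

lemma hindep_set_subset: "hindep_set K d H \<Longrightarrow> G \<subseteq> H \<Longrightarrow> hindep_set K d G"
  unfolding hindep_set_def by (meson Diff_mono hspan_mono order_refl subset_iff)

lemma hindep_set_mem_hspan:
  assumes "hindep_set K d H" "h \<in> H" "G \<subseteq> H" "h \<in> hspan K d G"
  shows "h \<in> G"
proof (rule ccontr)
  assume "h \<notin> G"
  then have "hspan K d G \<subseteq> hspan K d (H - {h})"
    using assms(3) by (intro hspan_mono) blast
  then show False
    using assms unfolding hindep_set_def by blast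
qed

context
  fixes K :: "'v set set" and d :: nat
  assumes finite_K: "finite K"
begin

lemma finite_chain: "c \<subseteq> simplices K k \<Longrightarrow> finite c"
  using finite_K simplices_subset by (metis finite_subset)

lemma empty_in_cycles: "{} \<in> cycles K d"
  by (auto simp: cycles_def)

lemma empty_in_boundaries: "{} \<in> boundaries K d"
  unfolding boundaries_def by (rule CollectI, rule exI[of _ "{}"]) simp

lemma symdiff_in_cycles:
  assumes "a \<in> cycles K d" "b \<in> cycles K d"
  shows "symdiff a b \<in> cycles K d"
proof -
  have "a \<subseteq> simplices K d" "b \<subseteq> simplices K d"
    using assms by (simp_all add: cycles_def)
  then show ?thesis
    using assms bd_symdiff[OF finite_chain finite_chain] by (simp add: cycles_def symdiff_subset)
qed

lemma symdiff_in_boundaries: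
  assumes "a \<in> boundaries K d" "b \<in> boundaries K d"
  shows "symdiff a b \<in> boundaries K d"
proof -
  obtain c1 c2 where c: "a = bd K (Suc d) c1" "c1 \<subseteq> simplices K (Suc d)"
     "b = bd K (Suc d) c2" "c2 \<subseteq> simplices K (Suc d)"
    using assms by (auto simp: boundaries_def)
  then have "symdiff a b = bd K (Suc d) (symdiff c1 c2)"
    by (simp add: bd_symdiff finite_chain)
  moreover have "symdiff c1 c2 \<subseteq> simplices K (Suc d)"
    using c by (simp add: symdiff_subset)
  ultimately show ?thesis by (auto simp: boundaries_def)
qed

lemma hclass_self: "a \<in> cycles K d \<Longrightarrow> a \<in> hclass K d a"
  by (auto simp: hclass_def empty_in_boundaries)

lemma hadd_hclass:
  assumes a: "a \<in> cycles K d" and b: "b \<in> cycles K d"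
  shows "hadd (hclass K d a) (hclass K d b) = hclass K d (symdiff a b)"
proof (rule set_eqI, rule iffI)
  fix z assume "z \<in> hadd (hclass K d a) (hclass K d b)"
  then obtain x y where xy: "x \<in> hclass K d a" "y \<in> hclass K d b" "z = symdiff x y"
    by (auto simp: hadd_def)
  then have "symdiff z (symdiff a b) = symdiff (symdiff x a) (symdiff y b)"
    by (auto simp: symdiff_def)
  then show "z \<in> hclass K d (symdiff a b)"
    using xy by (auto simp: hclass_def symdiff_in_cycles symdiff_in_boundaries)
next
  fix z assume z: "z \<in> hclass K d (symdiff a b)"
  have "symdiff (symdiff z b) a = symdiff z (symdiff a b)"
    by (auto simp: symdiff_def)
  then have "symdiff z b \<in> hclass K d a"
    using z b by (auto simp: hclass_def symdiff_in_cycles)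
  then show "z \<in> hadd (hclass K d a) (hclass K d b)"
    using hclass_self[OF b] symdiff_cancel_right[of z b] unfolding hadd_def by blast
qed

lemma hzero_in_homology: "hzero K d \<in> homology K d"
  by (auto simp: hzero_def homology_def empty_in_cycles)

lemma hadd_in_homology: "x \<in> homology K d \<Longrightarrow> y \<in> homology K d \<Longrightarrow> hadd x y \<in> homology K d"
  by (auto simp: homology_def hadd_hclass symdiff_in_cycles)

lemma hadd_hzero_left: "x \<in> homology K d \<Longrightarrow> hadd (hzero K d) x = x"
  by (auto simp: homology_def hzero_def hadd_hclass empty_in_cycles)

lemma hadd_hzero_right: "x \<in> homology K d \<Longrightarrow> hadd x (hzero K d) = x"
  using hadd_hzero_left hadd_commute by metis

lemma hadd_self: "x \<in> homology K d \<Longrightarrow> hadd x x = hzero K d"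
  by (auto simp: homology_def hzero_def hadd_hclass)

lemma hadd_cancel_left: "x \<in> homology K d \<Longrightarrow> y \<in> homology K d \<Longrightarrow> hadd x (hadd x y) = y"
  by (metis hadd_assoc hadd_self hadd_hzero_left)

lemma finite_homology: "finite (homology K d)"
proof -
  have "homology K d \<subseteq> Pow (Pow K)"
    using simplices_subset unfolding homology_def hclass_def cycles_def by blast
  then show ?thesis
    using finite_K by (meson finite_Pow_iff finite_subset)
qed

lemma finite_class:
  assumes "h \<in> homology K d"
  shows "finite h"
proof -
  have "h \<subseteq> Pow K"
    using assms simplices_subset unfolding homology_def hclass_def cycles_def by blast
  then show ?thesis
    using finite_K by (meson finite_Pow_iff finite_subset)
qed

lemma empty_notin_nonzero_class:
  assumes "h \<in> homology K d" "h \<noteq> hzero K d"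
  shows "{} \<notin> h"
proof
  assume "{} \<in> h"
  obtain a where a: "a \<in> cycles K d" "h = hclass K d a"
    using assms by (auto simp: homology_def)
  with \<open>{} \<in> h\<close> have "a \<in> boundaries K d"
    by (auto simp: hclass_def)
  then have "symdiff z a \<in> boundaries K d \<longleftrightarrow> z \<in> boundaries K d" for z
    using symdiff_in_boundaries symdiff_cancel_right by metis
  then have "hclass K d a = hzero K d"
    by (auto simp: hclass_def hzero_def)
  then show False
    using a assms(2) by simp
qed

lemma nonzero_class_representative:
  assumes "h \<in> homology K d" "h \<noteq> hzero K d" "z \<in> h"
  shows "z \<subseteq> K" "finite z" "z \<noteq> {}"
proof -
  have "z \<subseteq> simplices K d"
    using assms by (auto simp: homology_def hclass_def cycles_def)
  then show "z \<subseteq> K" "finite z"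
    using simplices_subset finite_chain by blast+
  show "z \<noteq> {}"
    using empty_notin_nonzero_class assms by blast
qed

lemma nonempty_class: "h \<in> homology K d \<Longrightarrow> h \<noteq> {}"
  using hclass_self by (auto simp: homology_def)

lemma hspan_subset_homology: "H \<subseteq> homology K d \<Longrightarrow> hspan K d H \<subseteq> homology K d"
proof
  fix x assume H: "H \<subseteq> homology K d" and x: "x \<in> hspan K d H"
  from x show "x \<in> homology K d"
    by (induction rule: hspan.induct) (use H hzero_in_homology hadd_in_homology in blast)+
qed

lemma hadd_in_hspan:
  assumes "H \<subseteq> homology K d" "x \<in> hspan K d H" "y \<in> hspan K d H"
  shows "hadd x y \<in> hspan K d H"
  using assms(2)
proof (induction x rule: hspan.induct)
  case zero
  then show ?case
    using assms hadd_hzero_left hspan_subset_homology by (metis subsetD)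
next
  case (add h x)
  then show ?case
    by (simp add: hadd_assoc hspan.add)
qed

lemma hspan_superset:
  assumes "H \<subseteq> homology K d"
  shows "H \<subseteq> hspan K d H"
proof
  fix h assume h: "h \<in> H"
  then have "hadd h (hzero K d) \<in> hspan K d H"
    by (rule hspan.add[OF _ hspan.zero])
  then show "h \<in> hspan K d H"
    using h assms hadd_hzero_right by auto
qed

lemma hspan_subset_hspan:
  assumes "H \<subseteq> hspan K d G" "G \<subseteq> homology K d"
  shows "hspan K d H \<subseteq> hspan K d G"
proof
  fix x assume "x \<in> hspan K d H"
  then show "x \<in> hspan K d G"
    by (induction rule: hspan.induct) (use assms in \<open>auto intro: hspan.zero hadd_in_hspan\<close>)
qed

lemma hspan_insert:
  assumes y: "y \<in> homology K d" and H: "H \<subseteq> homology K d"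
    and "x \<in> hspan K d (insert y H)"
  shows "x \<in> hspan K d H \<or> (\<exists>s\<in>hspan K d H. x = hadd y s)"
  using assms(3)
proof (induction rule: hspan.induct)
  case zero
  then show ?case by (simp add: hspan.zero)
next
  case (add h x)
  consider "x \<in> hspan K d H" | s where "s \<in> hspan K d H" "x = hadd y s"
    using add.IH by blast
  then show ?case
  proof cases
    case 1
    show ?thesis
    proof (cases "h = y")
      case True
      then show ?thesis
        using 1 by blast
    next
      case False
      then have "h \<in> H"
        using add.hyps by simp
      then show ?thesis
        using 1 hspan.add by blast
    qed
  next
    case 2
    show ?thesis
    proof (cases "h = y")
      case True
      have "s \<in> homology K d"
        using 2 hspan_subset_homology[OF H] by blast
      then have "hadd h x = s"
        using 2 True y hadd_cancel_left by simp
      then show ?thesis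
        using 2 by simp
    next
      case False
      then have "hadd h s \<in> hspan K d H"
        using 2 add.hyps hspan.add by simp
      moreover have "hadd h x = hadd y (hadd h s)"
        using 2 by (metis hadd_assoc hadd_commute)
      ultimately show ?thesis
        by blast
    qed
  qed
qed

lemma hspan_exchange:
  assumes y: "y \<in> homology K d" and H: "H \<subseteq> homology K d"
    and x: "x \<in> hspan K d (insert y H)" and "x \<notin> hspan K d H"
  shows "y \<in> hspan K d (insert x H)"
proof -
  obtain s where s: "s \<in> hspan K d H" "x = hadd y s"
    using hspan_insert[OF y H x] assms(4) by blast
  have "s \<in> homology K d"
    using s hspan_subset_homology[OF H] by blast
  then have "y = hadd x s"
    using s y by (metis hadd_assoc hadd_self hadd_hzero_right)
  moreover have H': "insert x H \<subseteq> homology K d"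
    using x y H hspan_subset_homology[of "insert y H"] by blast
  moreover have "x \<in> hspan K d (insert x H)" "s \<in> hspan K d (insert x H)"
    using hspan_superset[OF H'] hspan_mono[of H "insert x H"] s by blast+
  ultimately show ?thesis
    using hadd_in_hspan by simp
qed

lemma hindep_set_insert:
  assumes I: "hindep_set K d H" and g: "g \<in> homology K d" and ng: "g \<notin> hspan K d H"
  shows "hindep_set K d (insert g H)" "g \<notin> H"
proof -
  have HV: "H \<subseteq> homology K d"
    using I by (simp add: hindep_set_def)
  show gH: "g \<notin> H"
    using ng hspan_superset[OF HV] by blast
  have "h \<notin> hspan K d (insert g H - {h})" if h: "h \<in> H" for h
  proof
    assume "h \<in> hspan K d (insert g H - {h})"
    moreover have "insert g H - {h} = insert g (H - {h})"
      using gH h by blast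
    ultimately have "h \<in> hspan K d (insert g (H - {h}))"
      by simp
    moreover have "h \<notin> hspan K d (H - {h})"
      using I h by (simp add: hindep_set_def)
    moreover have "H - {h} \<subseteq> homology K d"
      using HV by blast
    ultimately have "g \<in> hspan K d (insert h (H - {h}))"
      using hspan_exchange[OF g] by blast
    then show False
      using ng h by (simp add: insert_absorb)
  qed
  moreover have "g \<notin> hspan K d (insert g H - {g})"
    using ng gH by (simp add: Diff_insert_absorb)
  ultimately show "hindep_set K d (insert g H)"
    using HV g unfolding hindep_set_def by blast
qed

lemma length_le_hdim: "hindep K d hs \<Longrightarrow> length hs \<le> hdim K d"
proof -
  assume hs: "hindep K d hs"
  have "length xs \<le> card (homology K d)" if "hindep K d xs" for xs
  proof -
    have "distinct xs" "set xs \<subseteq> homology K d"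
      using that by (simp_all add: hindep_def)
    then show ?thesis
      using card_mono[OF finite_homology] distinct_card by metis
  qed
  then have "{length xs | xs. hindep K d xs} \<subseteq> {..card (homology K d)}"
    by auto
  then have "finite {length xs | xs. hindep K d xs}"
    using finite_subset by blast
  then show ?thesis
    using hs unfolding hdim_def by (intro Max_ge) auto
qed

lemma maximal_hindep_spans:
  assumes I: "hindep K d hs" and L: "length hs = hdim K d" and g: "g \<in> homology K d"
  shows "g \<in> hspan K d (set hs)"
proof (rule ccontr)
  assume "g \<notin> hspan K d (set hs)"
  then have "hindep K d (hs @ [g])"
    using I hindep_set_insert[OF _ g] by (simp add: hindep_iff)
  then have "length (hs @ [g]) \<le> hdim K d"
    by (rule length_le_hdim)
  then show False
    using L by simp
qed

section \<open>Optimal bases are greedy\<close>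

text \<open>
  The exchange is performed inside a subfamily \<open>T\<close> of \<open>S\<close> that spans \<open>g\<close> and is minimal for this,
  so that \<open>g\<close> is not spanned by \<open>T - {h}\<close> for any \<open>h \<in> T\<close>.
\<close>

lemma hspan_exchange_outside:
  assumes S: "S \<subseteq> homology K d" "finite S" and G: "G \<subseteq> S"
    and g: "g \<in> hspan K d S" "g \<notin> hspan K d G"
  obtains h where "h \<in> S" "h \<notin> G" "h \<in> hspan K d (insert g (S - {h}))"
proof -
  define F where "F = {T. G \<subseteq> T \<and> T \<subseteq> S \<and> g \<in> hspan K d T}"
  have "S \<in> F"
    using G g by (simp add: F_def)
  then obtain T where T: "T \<in> F" and T_min: "\<And>T'. T' \<in> F \<Longrightarrow> card T \<le> card T'"
    using ex_has_least_nat[of "\<lambda>T. T \<in> F" S card] by blast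
  have TS: "G \<subseteq> T" "T \<subseteq> S" "g \<in> hspan K d T"
    using T by (simp_all add: F_def)
  then have "finite T" "T \<subseteq> homology K d"
    using S finite_subset by auto
  have "T \<noteq> G"
    using TS g by auto
  then obtain h where h: "h \<in> T" "h \<notin> G"
    using TS by blast
  have "g \<notin> hspan K d (T - {h})"
  proof
    assume "g \<in> hspan K d (T - {h})"
    then have "T - {h} \<in> F"
      using TS h by (auto simp: F_def)
    then show False
      using T_min[of "T - {h}"] card_Diff1_less[OF \<open>finite T\<close> h(1)] by simp
  qed
  moreover have "g \<in> hspan K d (insert h (T - {h}))"
    using TS h by (simp add: insert_absorb)
  ultimately have "h \<in> hspan K d (insert g (T - {h}))"
    using hspan_exchange[of h "T - {h}" g] h \<open>T \<subseteq> homology K d\<close> by blast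
  also have "\<dots> \<subseteq> hspan K d (insert g (S - {h}))"
    using TS by (intro hspan_mono) blast
  finally show thesis
    using that h TS by blast
qed

text \<open>
  If \<open>g\<close> needed some basis class \<open>h\<close> with \<open>S(h) > S(g)\<close>, exchanging \<open>h\<close> for \<open>g\<close> would give a
  basis of smaller total size.
\<close>

lemma optimal_basis_greedy:
  assumes ob: "optimal_basis l K d hs" and g: "g \<in> homology K d"
  shows "g \<in> hspan K d {h\<in>set hs. hsize l K h \<le> hsize l K g}"
proof (rule ccontr)
  define S where "S = hsize l K"
  define G where "G = {h\<in>set hs. S h \<le> S g}"
  assume "g \<notin> hspan K d {h\<in>set hs. hsize l K h \<le> hsize l K g}"
  then have ng: "g \<notin> hspan K d G"
    by (simp add: G_def S_def)
  have I: "hindep K d hs" and L: "length hs = hdim K d"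
    using ob by (auto simp: optimal_basis_def)
  then have I2: "hindep_set K d (set hs)" "distinct hs" and HV: "set hs \<subseteq> homology K d"
    by (simp_all add: hindep_iff hindep_set_def)
  obtain h where hs: "h \<in> set hs" and "h \<notin> G"
    and hx: "h \<in> hspan K d (insert g (set hs - {h}))"
    using hspan_exchange_outside[OF HV finite_set _ maximal_hindep_spans[OF I L g] ng]
    by (auto simp: G_def)
  then have Sgh: "S g < S h"
    by (simp add: G_def)
  define H where "H = set hs - {h}"
  have HV2: "H \<subseteq> homology K d"
    using HV by (auto simp: H_def)
  have ngH: "g \<notin> hspan K d H"
  proof
    assume "g \<in> hspan K d H"
    then have "insert g H \<subseteq> hspan K d H"
      using hspan_superset[OF HV2] by blast
    then have "h \<in> hspan K d H"
      using hx hspan_subset_hspan[OF _ HV2] unfolding H_def by blast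
    then show False
      using I2 hs by (auto simp: hindep_set_def H_def)
  qed
  have "hindep_set K d H"
    using hindep_set_subset[OF I2(1)] by (simp add: H_def)
  then have Ig: "hindep_set K d (insert g H)" "g \<notin> H"
    using hindep_set_insert[OF _ g ngH] by blast+
  define hs' where "hs' = map (\<lambda>x. if x = h then g else x) hs"
  have set': "set hs' = insert g H"
    using hs by (auto simp: hs'_def H_def)
  have "inj_on (\<lambda>x. if x = h then g else x) (set hs)"
    using Ig(2) by (auto simp: inj_on_def H_def)
  then have dist': "distinct hs'"
    using I2(2) by (simp add: hs'_def distinct_map)
  then have "hindep K d hs'" and "length hs' = hdim K d"
    using set' Ig(1) L by (simp_all add: hindep_iff hs'_def)
  then have "sum_list (map S hs) \<le> sum_list (map S hs')"
    using ob by (auto simp: optimal_basis_def S_def)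
  moreover have "sum_list (map S hs') = S g + sum S H"
    using dist' set' Ig(2) by (simp add: sum_list_distinct_conv_sum_set H_def)
  moreover have "sum_list (map S hs) = S h + sum S H"
    using I2(2) hs by (simp add: sum_list_distinct_conv_sum_set H_def sum.remove)
  ultimately show False
    using Sgh by simp
qed

lemma optimal_basis_hspan_le:
  assumes ob: "optimal_basis l K d hs" and X: "X \<subseteq> homology K d"
    and small: "\<And>x. x \<in> X \<Longrightarrow> hsize l K x \<le> r"
  shows "hspan K d X \<subseteq> hspan K d {h\<in>set hs. hsize l K h \<le> r}"
proof (rule hspan_subset_hspan)
  show "{h\<in>set hs. hsize l K h \<le> r} \<subseteq> homology K d"
    using ob by (auto simp: optimal_basis_def hindep_def)
  show "X \<subseteq> hspan K d {h\<in>set hs. hsize l K h \<le> r}"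
  proof
    fix x assume x: "x \<in> X"
    have "x \<in> hspan K d {h\<in>set hs. hsize l K h \<le> hsize l K x}"
      using x X by (intro optimal_basis_greedy[OF ob]) blast
    moreover have "{h\<in>set hs. hsize l K h \<le> hsize l K x} \<subseteq> {h\<in>set hs. hsize l K h \<le> r}"
      using small[OF x] by auto
    ultimately show "x \<in> hspan K d {h\<in>set hs. hsize l K h \<le> r}"
      using hspan_mono by blast
  qed
qed

end

section \<open>Projections between the filtrations of two optimal bases\<close>

lemma optimal_basis_mem:
  assumes "optimal_basis l K d hs" "h \<in> set hs"
  shows "h \<in> homology K d" "h \<noteq> hzero K d"
  using assms hspan.zero unfolding optimal_basis_def hindep_def by blast+

lemma sorted_take_le_nth:
  assumes "sorted (map S xs)" "j \<le> length xs" "x \<in> set (take j xs)"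
  shows "S x \<le> S (xs ! (j - 1))"
proof -
  obtain k where "k < j" "k < length xs" "x = xs ! k"
    using assms(3) by (auto simp: in_set_conv_nth)
  then show ?thesis
    using sorted_nth_mono[OF assms(1), of k "j - 1"] assms(2) by simp
qed

lemma sorted_le_subset_take:
  assumes "sorted (map S xs)" "j < length xs" "r < S (xs ! j)"
  shows "{x\<in>set xs. S x \<le> r} \<subseteq> set (take j xs)"
proof
  fix x assume "x \<in> {x\<in>set xs. S x \<le> r}"
  then obtain k where k: "k < length xs" "x = xs ! k" "S x \<le> r"
    by (auto simp: in_set_conv_nth)
  then have "k < j"
    using sorted_nth_mono[OF assms(1), of j k] assms(3) by (cases "k < j") auto
  then show "x \<in> set (take j xs)"
    using k by (auto simp: in_set_conv_nth)
qed

lemma set_take_optimal_basis_subset: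
  assumes "optimal_basis l K d hs"
  shows "set (take j hs) \<subseteq> homology K d"
  using optimal_basis_mem[OF assms] by (meson in_set_takeD subsetI)

lemma proj_idx_bounds:
  assumes "finite K" and oa: "optimal_basis la K d a" and ob: "optimal_basis lb K d b"
    and i: "i \<in> {1..length a}"
  shows "filt K d a i \<subseteq> filt K d b (proj_idx K d a b i)"
    and "proj_idx K d a b i \<in> {1..length b}"
proof -
  have prefix: "set (take i a) \<subseteq> homology K d"
    by (rule set_take_optimal_basis_subset[OF oa])
  then have "filt K d a i \<subseteq> homology K d"
    unfolding filt_def by (rule hspan_subset_homology[OF assms(1)])
  also have "\<dots> \<subseteq> filt K d b (length b)"
    using ob maximal_hindep_spans[OF assms(1)] by (auto simp: filt_def optimal_basis_def)
  finally have full: "filt K d a i \<subseteq> filt K d b (length b)" .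
  then show proj: "filt K d a i \<subseteq> filt K d b (proj_idx K d a b i)"
    unfolding proj_idx_def by (rule LeastI)
  have "proj_idx K d a b i \<le> length b"
    using full unfolding proj_idx_def by (rule Least_le)
  moreover have "proj_idx K d a b i \<noteq> 0"
  proof
    have "take i a ! 0 \<in> set (take i a)"
      using i by (intro nth_mem) simp
    then have a0: "a ! 0 \<in> set (take i a)"
      using i by simp
    then have "a ! 0 \<in> filt K d a i"
      unfolding filt_def by (rule subsetD[OF hspan_superset[OF assms(1) prefix]])
    moreover assume "proj_idx K d a b i = 0"
    ultimately have "a ! 0 \<in> hspan K d {}"
      using proj unfolding filt_def by auto
    then show False
      using hspan_empty optimal_basis_mem(2)[OF oa in_set_takeD[OF a0]] by blast
  qed
  ultimately show "proj_idx K d a b i \<in> {1..length b}"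
    by simp
qed

lemma filt_subset_hspan_hsize_le:
  assumes "finite K" and oa: "optimal_basis la K d a" and sa: "sorted (map (hsize la K) a)"
    and ob: "optimal_basis lb K d b" and j: "j \<le> length a"
    and stable: "\<And>h. h \<in> homology K d \<Longrightarrow> h \<noteq> hzero K d \<Longrightarrow> hsize lb K h \<le> hsize la K h + e"
  shows "filt K d a j \<subseteq> hspan K d {h\<in>set b. hsize lb K h \<le> filt_size la K a j + e}"
  unfolding filt_def filt_size_def
proof (rule optimal_basis_hspan_le[OF assms(1) ob set_take_optimal_basis_subset[OF oa]])
  fix x assume x: "x \<in> set (take j a)"
  have "hsize lb K x \<le> hsize la K x + e"
    using stable optimal_basis_mem[OF oa in_set_takeD[OF x]] by blast
  also have "hsize la K x \<le> hsize la K (a ! (j - 1))"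
    by (rule sorted_take_le_nth[OF sa j x])
  finally show "hsize lb K x \<le> hsize la K (a ! (j - 1)) + e"
    by simp
qed

context
  fixes K :: "'v set set" and d :: nat and la lb :: "'v set \<Rightarrow> real" and e :: real
    and a b :: "'v set set set list"
  assumes finite_K: "finite K"
    and oa: "optimal_basis la K d a" and sa: "sorted (map (hsize la K) a)"
    and ob: "optimal_basis lb K d b" and sb: "sorted (map (hsize lb K) b)"
    and stable_b: "\<And>h. h \<in> homology K d \<Longrightarrow> h \<noteq> hzero K d \<Longrightarrow> hsize lb K h \<le> hsize la K h + e"
    and stable_a: "\<And>h. h \<in> homology K d \<Longrightarrow> h \<noteq> hzero K d \<Longrightarrow> hsize la K h \<le> hsize lb K h + e"
begin

lemma filt_size_proj_le:
  assumes i: "i \<in> {1..length a}"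
  shows "filt_size lb K b (proj_idx K d a b i) \<le> filt_size la K a i + e"
proof (rule ccontr)
  define j where "j = proj_idx K d a b i"
  define r where "r = filt_size la K a i + e"
  have j: "j \<in> {1..length b}"
    unfolding j_def by (rule proj_idx_bounds(2)[OF finite_K oa ob i])
  assume "\<not> ?thesis"
  then have "r < hsize lb K (b ! (j - 1))"
    by (simp add: j_def r_def filt_size_def)
  moreover have "j - 1 < length b"
    using j by auto
  ultimately have "{h\<in>set b. hsize lb K h \<le> r} \<subseteq> set (take (j - 1) b)"
    using sorted_le_subset_take[OF sb] by blast
  then have "hspan K d {h\<in>set b. hsize lb K h \<le> r} \<subseteq> filt K d b (j - 1)"
    unfolding filt_def by (rule hspan_mono)
  moreover have "filt K d a i \<subseteq> hspan K d {h\<in>set b. hsize lb K h \<le> r}"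
    unfolding r_def using i by (intro filt_subset_hspan_hsize_le[OF finite_K oa sa ob _ stable_b]) simp
  ultimately have "filt K d a i \<subseteq> filt K d b (j - 1)"
    by (rule order_trans[rotated])
  then have "j \<le> j - 1"
    unfolding j_def proj_idx_def by (rule Least_le)
  then show False
    using j by auto
qed

lemma filt_size_le_proj:
  assumes i: "i \<in> {1..length a}"
  shows "filt_size la K a i \<le> filt_size lb K b (proj_idx K d a b i) + e"
proof -
  define j where "j = proj_idx K d a b i"
  define t where "t = filt_size lb K b j"
  define ai where "ai = a ! (i - 1)"
  have j: "j \<in> {1..length b}"
    unfolding j_def by (rule proj_idx_bounds(2)[OF finite_K oa ob i])
  have "take i a ! (i - 1) \<in> set (take i a)"
    using i by (intro nth_mem) simp
  then have "ai \<in> set (take i a)"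
    using i by (simp add: ai_def)
  then have "ai \<in> filt K d a i"
    unfolding filt_def by (rule subsetD[OF hspan_superset[OF finite_K set_take_optimal_basis_subset[OF oa]]])
  also have "filt K d a i \<subseteq> filt K d b j"
    unfolding j_def by (rule proj_idx_bounds(1)[OF finite_K oa ob i])
  also have "\<dots> \<subseteq> hspan K d {h\<in>set a. hsize la K h \<le> t + e}"
    unfolding t_def using j by (intro filt_subset_hspan_hsize_le[OF finite_K ob sb oa _ stable_a]) simp
  finally have span: "ai \<in> hspan K d {h\<in>set a. hsize la K h \<le> t + e}" .
  have indep: "hindep_set K d (set a)"
    using oa by (simp add: optimal_basis_def hindep_iff)
  have "ai \<in> set a"
    unfolding ai_def using i by (intro nth_mem) auto
  then have "ai \<in> {h\<in>set a. hsize la K h \<le> t + e}"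
    by (rule hindep_set_mem_hspan[OF indep _ _ span]) auto
  then show ?thesis
    by (simp add: filt_size_def ai_def t_def j_def)
qed

lemma filt_size_proj_dist:
  assumes "i \<in> {1..length a}"
  shows "\<bar>filt_size la K a i - filt_size lb K b (proj_idx K d a b i)\<bar> \<le> e"
  using filt_size_proj_le[OF assms] filt_size_le_proj[OF assms] by (simp add: abs_le_iff)

end

section \<open>Stability of sizes\<close>

lemma Min_image_le_add:
  fixes f g :: "'a \<Rightarrow> 'b::linordered_ab_group_add"
  assumes "finite A" "A \<noteq> {}" "\<And>x. x \<in> A \<Longrightarrow> f x \<le> g x + e"
  shows "Min (f ` A) \<le> Min (g ` A) + e"
proof -
  have "Min (g ` A) \<in> g ` A"
    using assms(1,2) by simp
  then obtain x where x: "x \<in> A" "g x = Min (g ` A)"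
    by (metis imageE)
  have "Min (f ` A) \<le> f x"
    using x assms(1) by simp
  then show ?thesis
    using x assms(3)[of x] by simp
qed

lemma Max_image_le_add:
  fixes f g :: "'a \<Rightarrow> 'b::linordered_ab_group_add"
  assumes "finite A" "A \<noteq> {}" "\<And>x. x \<in> A \<Longrightarrow> f x \<le> g x + e"
  shows "Max (f ` A) \<le> Max (g ` A) + e"
proof -
  have "Max (f ` A) \<in> f ` A"
    using assms(1,2) by simp
  then obtain x where x: "x \<in> A" "f x = Max (f ` A)"
    by (metis imageE)
  have "g x \<le> Max (g ` A)"
    using x assms(1) by simp
  then show ?thesis
    using x assms(3)[of x] by (metis add_right_mono order_trans)
qed

text \<open>
  For the zero class the
  empty cycle makes every ball carry \<open>h\<close>, and \<open>radius\<close> is a junk value.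
\<close>

lemma radius_eq_Min:
  assumes "finite K" and h: "h \<in> homology K d" "h \<noteq> hzero K d"
  shows "radius l K p h = Min ((\<lambda>z. Max (geod_simplex l K p ` z)) ` h)"
proof -
  define m where "m = (\<lambda>z. Max (geod_simplex l K p ` z))"
  note rep = nonzero_class_representative[OF assms(1) h]
  have carries_iff: "carries (ball l K p t) h \<longleftrightarrow> Min (m ` h) \<le> t" for t
  proof -
    have "carries (ball l K p t) h \<longleftrightarrow> (\<exists>z\<in>h. \<forall>\<sigma>\<in>z. geod_simplex l K p \<sigma> \<le> t)"
      unfolding carries_def ball_def using rep(1) by blast
    also have "\<dots> \<longleftrightarrow> (\<exists>z\<in>h. m z \<le> t)"
      unfolding m_def using rep by (simp add: Max_le_iff)
    also have "\<dots> \<longleftrightarrow> Min (m ` h) \<le> t"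
      using finite_class[OF assms(1) h(1)] nonempty_class[OF assms(1) h(1)] by (simp add: Min_le_iff)
    finally show ?thesis .
  qed
  have "radius l K p h = (LEAST t. Min (m ` h) \<le> t)"
    unfolding radius_def carries_iff ..
  also have "\<dots> = Min (m ` h)"
    by (rule Least_equality) auto
  finally show ?thesis
    by (simp add: m_def)
qed

lemma hsize_le_add:
  assumes K: "simplicial_complex K" and h: "h \<in> homology K d" "h \<noteq> hzero K d"
    and V: "vertices K \<noteq> {}"
    and geod: "\<And>p q. p \<in> vertices K \<Longrightarrow> q \<in> vertices K \<Longrightarrow> geod l1 K p q \<le> geod l2 K p q + e"
  shows "hsize l1 K h \<le> hsize l2 K h + e"
proof -
  have finite_K: "finite K" and finite_V: "finite (vertices K)"
    using K by (auto simp: simplicial_complex_def vertices_def)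
  have simplex: "finite \<sigma>" "\<sigma> \<noteq> {}" "\<sigma> \<subseteq> vertices K" if "\<sigma> \<in> K" for \<sigma>
    using K that by (auto simp: simplicial_complex_def vertices_def)
  have simplex_le: "geod_simplex l1 K p \<sigma> \<le> geod_simplex l2 K p \<sigma> + e"
    if "p \<in> vertices K" "\<sigma> \<in> K" for p \<sigma>
    unfolding geod_simplex_def using simplex[OF that(2)] geod[OF that(1)]
    by (intro Max_image_le_add) auto
  have "radius l1 K p h \<le> radius l2 K p h + e" if p: "p \<in> vertices K" for p
  proof -
    note rep = nonzero_class_representative[OF finite_K h]
    have "Max (geod_simplex l1 K p ` z) \<le> Max (geod_simplex l2 K p ` z) + e" if "z \<in> h" for z
      using rep[OF that] simplex_le[OF p] by (intro Max_image_le_add) auto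
    then show ?thesis
      unfolding radius_eq_Min[OF finite_K h]
      by (rule Min_image_le_add[OF finite_class[OF finite_K h(1)] nonempty_class[OF finite_K h(1)]])
  qed
  then show ?thesis
    unfolding hsize_def using finite_V V by (intro Min_image_le_add) auto
qed

lemma abs_geod_diff_le_geod_eps:
  assumes "finite (vertices K)" "p \<in> vertices K" "q \<in> vertices K"
  shows "\<bar>geod l1 K p q - geod l2 K p q\<bar> \<le> geod_eps l1 l2 K"
  unfolding geod_eps_def using assms by (intro Max_ge finite_image_set2) auto

lemma abs_hsize_diff_le_geod_eps:
  assumes K: "simplicial_complex K" and V: "vertices K \<noteq> {}"
    and h: "h \<in> homology K d" "h \<noteq> hzero K d"
  shows "\<bar>hsize l1 K h - hsize l2 K h\<bar> \<le> geod_eps l1 l2 K"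
proof -
  have "finite (vertices K)"
    using K by (auto simp: simplicial_complex_def vertices_def)
  then have "\<bar>geod l1 K p q - geod l2 K p q\<bar> \<le> geod_eps l1 l2 K"
    if "p \<in> vertices K" "q \<in> vertices K" for p q
    using that by (rule abs_geod_diff_le_geod_eps)
  then have "hsize l1 K h \<le> hsize l2 K h + geod_eps l1 l2 K"
    and "hsize l2 K h \<le> hsize l1 K h + geod_eps l1 l2 K"
    by (intro hsize_le_add[OF K h V]; fastforce)+
  then show ?thesis
    by linarith
qed

lemma vertices_nonempty: "simplicial_complex K \<Longrightarrow> K \<noteq> {} \<Longrightarrow> vertices K \<noteq> {}"
  by (auto simp: simplicial_complex_def vertices_def)

theorem theorem3p5:
  fixes K :: "'v set set" and l1 l2 :: "'v set \<Rightarrow> real" and d :: nat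
    and hs1 hs2 :: "'v set set set list"
  assumes "simplicial_complex K"
    and "skel_connected K"
    and "edge_lengths K l1" and "edge_lengths K l2"
    and "optimal_basis l1 K d hs1" and "sorted (map (hsize l1 K) hs1)"
    and "optimal_basis l2 K d hs2" and "sorted (map (hsize l2 K) hs2)"
  shows "filt_dist l1 l2 K d hs1 hs2 \<le> geod_eps l1 l2 K"
proof -
  have finite_K: "finite K" and finite_V: "finite (vertices K)"
    using assms(1) by (auto simp: simplicial_complex_def vertices_def)
  have V: "vertices K \<noteq> {}"
    using vertices_nonempty[OF assms(1)] assms(2) by (simp add: skel_connected_def)
  then obtain v where v: "v \<in> vertices K"
    by blast
  have stable1: "hsize l1 K h \<le> hsize l2 K h + geod_eps l1 l2 K"
    and stable2: "hsize l2 K h \<le> hsize l1 K h + geod_eps l1 l2 K"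
    if "h \<in> homology K d" "h \<noteq> hzero K d" for h
    using abs_hsize_diff_le_geod_eps[OF assms(1) V that, of l1 l2] by linarith+
  have "0 \<le> geod_eps l1 l2 K"
    using abs_geod_diff_le_geod_eps[OF finite_V v v, of l1 l2] by simp
  moreover have "\<bar>filt_size l1 K hs1 i - filt_size l2 K hs2 (proj_idx K d hs1 hs2 i)\<bar> \<le> geod_eps l1 l2 K"
    if "i \<in> {1..length hs1}" for i
    by (rule filt_size_proj_dist[OF finite_K assms(5-8) stable2 stable1 that])
  moreover have "\<bar>filt_size l2 K hs2 i - filt_size l1 K hs1 (proj_idx K d hs2 hs1 i)\<bar> \<le> geod_eps l1 l2 K"
    if "i \<in> {1..length hs2}" for i
    by (rule filt_size_proj_dist[OF finite_K assms(7,8,5,6) stable1 stable2 that])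
  ultimately show ?thesis
    unfolding filt_dist_def by (subst Max_le_iff) auto
qed

end
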